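(* Let $\mathcal H^1_{\mathrm{TT}}=(C,F^1,D,G)$ satisfy the Hybrid Basic Conditions, let $(\Phi,\{H_k\}_{k=1}^\infty)$ with $\Phi=(\phi_s,\phi_f)$ and $H_k=(h_{s,k},h_{f,k})$ be a two-timescale asymptotic simulation of $\mathcal H^1_{\mathrm{TT}}$, and let $\Lambda:\mathbb R^{n_s}\rightrightarrows\mathbb R^{n_f}$ have compact graph with $\omega(\Phi)\subset\mathrm{gph}(\Lambda)$. Then $(\phi_s,\{h_{s,k}\}_{k=1}^\infty)$ is an asymptotic simulation of the reduced system $\mathcal H^\Lambda_{\mathrm R}$.
   Context: Hybrid inclusions. A hybrid inclusion $\mathcal H=(C,F,D,G)$ on $\mathbb R^n$ consists of sets $C,D\subset\mathbb R^n$ and set-valued maps $F,G:\mathbb R^n\rightrightarrows\mathbb R^n$ ($x\in C,\ \dot x\in F(x)$; $x\in D,\ x^+\in G(x)$). It satisfies the Hybrid Basic Conditions if $C,D$ are closed; $F,G$ are outer semicontinuous and locally bounded; $F(x)$ is nonempty and convex for every $x\in C$; $G(x)$ is nonempty for every $x\in D$. $F_C(x):=F(x)$ for $x\in C$, $\emptyset$ otherwise; $G_D$ analogously. Hybrid sequences. A compact hybrid sequence domain is $\bigcup_{j=0}^{J-1}(\{k_j,\dots,k_{j+1}\}\times\{j\})$ with $J\in\mathbb N$, integers $0=k_0\le\dots\le k_J$; a hybrid sequence domain is a union of a nondecreasing sequence of such sets; a hybrid sequence is a map on a hybrid sequence domain; complete = unbounded domain; complete in the $k$- (resp. $j$-)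 direction = set of $k$'s (resp. $j$'s) in the domain unbounded. $\bar\jmath_k:=\inf\{j:(k+1,j)\in\mathrm{dom}\,\phi\}$, $\bar k_j:=\inf\{k:(k,j+1)\in\mathrm{dom}\,\phi\}$. $\limsup$ of a sequence = set of its accumulation points. $\omega(\phi)$ = set of all $\lim_i\phi(k_i,j_i)$ with $(k_i,j_i)\in\mathrm{dom}\,\phi$, $k_i+j_i\to\infty$. Asymptotic simulations. $\{h_k\}$ is admissible if $h_k>0$, $h_k\to0$, $\sum h_k=\infty$; $\tau_k:=\sum_{i=0}^{k-1}h_{i+1}$, $m(t):=\max\{k:\tau_k\le t\}$. $(\phi,\{h_k\})$ is an asymptotic simulation of $\mathcal H$ if $\phi$ is a bounded complete hybrid sequence, $\{h_k\}$ is admissible, and: (1) if $\phi$ is complete in the $k$-direction, there is a bounded sequence $\{f_k\}_{k\ge0}$ with $\limsup_{k}(\phi(k,\bar\jmath_k),f_k)\subset\mathrm{gph}(F_C)$ and, with $\hat f_{k+1}:=(\phi(k+1,\bar\jmath_k)-\phi(k,\bar\jmath_k))/h_{k+1}$, for each $T>0$, $\lim_{n\to\infty}\sup_{n+1\le k\le m(\tau_n+T)}|\sum_{i=n}^{k-1}h_{i+1}(\hat f_{i+1}-f_i)|=0$; (2) if $\phi$ is complete in the $j$-direction, $\limsup_{j}(\phi(\bar k_j,j),\phi(\bar k_j,j+1))\subset\mathrm{gph}(G_D)$. Two-timescale setting. $n=n_s+n_f$, $x=(x_s,x_f)$. $\mathcal H^1_{\mathrm{TT}}=(C,F^1,D,G)$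 with $C,D\subset\mathbb R^n$, $F_s:\mathbb R^n\rightrightarrows\mathbb R^{n_s}$, $F_f:\mathbb R^n\rightrightarrows\mathbb R^{n_f}$, $F^1(x):=F_s(x)\times F_f(x)$, $G:\mathbb R^n\rightrightarrows\mathbb R^n$. $\{H_k\}$, $H_k=(h_{s,k},h_{f,k})\in\mathbb R^2_{>0}$, is two-timescale admissible if both component sequences are admissible and $h_{s,k}/h_{f,k}\to0$. For $r\in\{s,f\}$: $\tau_{r,k}:=\sum_{i=0}^{k-1}h_{r,i+1}$, $m_r(t):=\max\{k:\tau_{r,k}\le t\}$, $\mathcal I_{r,n,T}:=\{k:n+1\le k\le m_r(\tau_{r,n}+T)\}$. $(\Phi,\{H_k\})$ is a two-timescale asymptotic simulation of $\mathcal H^1_{\mathrm{TT}}$ if $\Phi=(\phi_s,\phi_f)$ is a bounded complete hybrid sequence, $\{H_k\}$ is two-timescale admissible, and: (1) if $\Phi$ is complete in the $k$-direction, there is a bounded sequence $f_k=(f_{s,k},f_{f,k})$ with $\limsup_k(\Phi(k,\bar\jmath_k),f_k)\subset\mathrm{gph}(F^1_C)$ and, with $\hat f_{r,k+1}:=(\phi_r(k+1,\bar\jmath_k)-\phi_r(k,\bar\jmath_k))/h_{r,k+1}$, for all $T>0$ and $r\in\{s,f\}$, $\lim_{n\to\infty}\sup_{k\in\mathcal I_{r,n,T}}|\sum_{i=n}^{k-1}h_{r,i+1}(\hat f_{r,i+1}-f_{r,i})|=0$; (2) if $\Phi$ is complete in the $j$-direction, $\limsup_j(\Phi(\bar k_j,j),\Phi(\bar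 k_j,j+1))\subset\mathrm{gph}(G_D)$. Reduced system. Given $\Lambda:\mathbb R^{n_s}\rightrightarrows\mathbb R^{n_f}$, define $\Lambda^C_{\mathrm R},\Lambda^D_{\mathrm R}:\mathbb R^{n_s}\rightrightarrows\mathbb R^{n_f}$ by $\mathrm{gph}(\Lambda^C_{\mathrm R}):=\mathrm{gph}(\Lambda)\cap C$ and $\mathrm{gph}(\Lambda^D_{\mathrm R}):=\mathrm{gph}(\Lambda)\cap D$. Set $C^\Lambda_{\mathrm R}:=\mathrm{dom}(\Lambda^C_{\mathrm R})$, $D^\Lambda_{\mathrm R}:=\mathrm{dom}(\Lambda^D_{\mathrm R})$, $F^\Lambda_{\mathrm R}(x_s):=\overline{\mathrm{co}}\{f_s\in\mathbb R^{n_s}:f_s\in F_s(x_s,x_f),\ x_f\in\Lambda^C_{\mathrm R}(x_s)\}$ (closed convex hull), and, with $G_s(x_s,x_f):=\mathrm{proj}_{\mathbb R^{n_s}}G(x_s,x_f)$, $G^\Lambda_{\mathrm R}(x_s):=\{g_s:g_s\in G_s(x_s,x_f),\ x_f\in\Lambda^D_{\mathrm R}(x_s)\}$. The reduced system is the hybrid inclusion $\mathcal H^\Lambda_{\mathrm R}$ on $\mathbb R^{n_s}$ with data $(C^\Lambda_{\mathrm R},F^\Lambda_{\mathrm R},D^\Lambda_{\mathrm R},G^\Lambda_{\mathrm R})$. *)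

theory Defs
  imports "HOL-Analysis.Analysis"
begin

definition gph :: "('a \<Rightarrow> 'b set) \<Rightarrow> ('a \<times> 'b) set" where
  "gph F = {(x, y). y \<in> F x}"

definition gph_on :: "'a set \<Rightarrow> ('a \<Rightarrow> 'b set) \<Rightarrow> ('a \<times> 'b) set" where
  "gph_on C F = {(x, y). x \<in> C \<and> y \<in> F x}"

definition osc :: "('a::metric_space \<Rightarrow> 'b::metric_space set) \<Rightarrow> bool" where
  "osc F \<longleftrightarrow> (\<forall>x y xs ys. (\<forall>i. ys i \<in> F (xs i)) \<and> xs \<longlonglongrightarrow> x \<and> ys \<longlonglongrightarrow> y
                  \<longrightarrow> y \<in> F x)"

definition locally_bounded :: "('a::metric_space \<Rightarrow> 'b::metric_space set) \<Rightarrow> bool" where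
  "locally_bounded F \<longleftrightarrow> (\<forall>x. \<exists>U. open U \<and> x \<in> U \<and> bounded (\<Union>(F ` U)))"

definition hybrid_basic_conditions ::
  "('a::euclidean_space) set \<Rightarrow> ('a \<Rightarrow> 'a set) \<Rightarrow> 'a set \<Rightarrow> ('a \<Rightarrow> 'a set) \<Rightarrow> bool" where
  "hybrid_basic_conditions C F D G \<longleftrightarrow>
     closed C \<and> closed D \<and> osc F \<and> osc G \<and> locally_bounded F \<and> locally_bounded G \<and>
     (\<forall>x\<in>C. F x \<noteq> {} \<and> convex (F x)) \<and> (\<forall>x\<in>D. G x \<noteq> {})"

definition compact_hsd :: "(nat \<times> nat) set \<Rightarrow> bool" where
  "compact_hsd E \<longleftrightarrow> (\<exists>(J::nat) (k::nat \<Rightarrow> nat). k 0 = 0 \<and> (\<forall>j<J. k j \<le> k (Suc j)) \<and>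
       E = (\<Union>j<J. {k j..k (Suc j)} \<times> {j}))"

definition hsd :: "(nat \<times> nat) set \<Rightarrow> bool" where
  "hsd E \<longleftrightarrow> (\<exists>S::nat \<Rightarrow> (nat \<times> nat) set. (\<forall>i. compact_hsd (S i)) \<and>
       (\<forall>i. S i \<subseteq> S (Suc i)) \<and> E = (\<Union>i. S i))"

text \<open>A hybrid sequence is a map \<phi> on a hybrid sequence domain E
  (values of \<phi> outside E are irrelevant).\<close>
definition complete_dom :: "(nat \<times> nat) set \<Rightarrow> bool" where
  "complete_dom E \<longleftrightarrow> infinite E"

definition complete_k :: "(nat \<times> nat) set \<Rightarrow> bool" where
  "complete_k E \<longleftrightarrow> infinite (fst ` E)"

definition complete_j :: "(nat \<times> nat) set \<Rightarrow> bool" where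
  "complete_j E \<longleftrightarrow> infinite (snd ` E)"

definition bounded_complete_hseq :: "(nat \<times> nat) set \<Rightarrow> (nat \<times> nat \<Rightarrow> 'a::metric_space) \<Rightarrow> bool" where
  "bounded_complete_hseq E \<phi> \<longleftrightarrow> hsd E \<and> bounded (\<phi> ` E) \<and> complete_dom E"

definition jbar :: "(nat \<times> nat) set \<Rightarrow> nat \<Rightarrow> nat" where
  "jbar E k = Inf {j. (Suc k, j) \<in> E}"

definition kbar :: "(nat \<times> nat) set \<Rightarrow> nat \<Rightarrow> nat" where
  "kbar E j = Inf {k. (k, Suc j) \<in> E}"

text \<open>limsup of a sequence = set of its accumulation points.\<close>
definition acc_pts :: "(nat \<Rightarrow> 'a::topological_space) \<Rightarrow> 'a set" where
  "acc_pts x = {y. \<exists>r. strict_mono r \<and> (x \<circ> r) \<longlonglongrightarrow> y}"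

definition omega_limit :: "(nat \<times> nat) set \<Rightarrow> (nat \<times> nat \<Rightarrow> 'a::topological_space) \<Rightarrow> 'a set" where
  "omega_limit E \<phi> = {y. \<exists>s::nat \<Rightarrow> nat \<times> nat. (\<forall>i. s i \<in> E) \<and>
      filterlim (\<lambda>i. fst (s i) + snd (s i)) at_top sequentially \<and> (\<lambda>i. \<phi> (s i)) \<longlonglongrightarrow> y}"

section \<open>Step sizes (indexed from 1: h 1, h 2, ...; h 0 unused)\<close>

definition tau :: "(nat \<Rightarrow> real) \<Rightarrow> nat \<Rightarrow> real" where
  "tau h k = (\<Sum>i<k. h (Suc i))"

definition admissible :: "(nat \<Rightarrow> real) \<Rightarrow> bool" where
  "admissible h \<longleftrightarrow> (\<forall>k\<ge>1. 0 < h k) \<and> h \<longlonglongrightarrow> 0 \<and> filterlim (tau h) at_top sequentially"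

definition mfun :: "(nat \<Rightarrow> real) \<Rightarrow> real \<Rightarrow> nat" where
  "mfun h t = (GREATEST k. tau h k \<le> t)"

definition tt_admissible :: "(nat \<Rightarrow> real) \<Rightarrow> (nat \<Rightarrow> real) \<Rightarrow> bool" where
  "tt_admissible hs hf \<longleftrightarrow> admissible hs \<and> admissible hf \<and> (\<lambda>k. hs k / hf k) \<longlonglongrightarrow> 0"

text \<open>fhat_next E h \<phi> i is \<open>\<hat>f_{i+1}\<close>.\<close>
definition fhat_next :: "(nat \<times> nat) set \<Rightarrow> (nat \<Rightarrow> real) \<Rightarrow> (nat \<times> nat \<Rightarrow> 'a::real_normed_vector) \<Rightarrow> nat \<Rightarrow> 'a" where
  "fhat_next E h \<phi> i = (\<phi> (Suc i, jbar E i) - \<phi> (i, jbar E i)) /\<^sub>R h (Suc i)"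

definition sum_cond :: "(nat \<times> nat) set \<Rightarrow> (nat \<Rightarrow> real) \<Rightarrow> (nat \<times> nat \<Rightarrow> 'a::real_normed_vector) \<Rightarrow> (nat \<Rightarrow> 'a) \<Rightarrow> bool" where
  "sum_cond E h \<phi> f \<longleftrightarrow> (\<forall>T>0. \<forall>\<epsilon>>0. \<exists>N. \<forall>n\<ge>N. \<forall>k. n + 1 \<le> k \<and> k \<le> mfun h (tau h n + T) \<longrightarrow>
       norm (\<Sum>i\<in>{n..<k}. h (Suc i) *\<^sub>R (fhat_next E h \<phi> i - f i)) < \<epsilon>)"

definition asym_sim ::
  "'a::euclidean_space set \<Rightarrow> ('a \<Rightarrow> 'a set) \<Rightarrow> 'a set \<Rightarrow> ('a \<Rightarrow> 'a set) \<Rightarrow>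
   (nat \<times> nat) set \<Rightarrow> (nat \<times> nat \<Rightarrow> 'a) \<Rightarrow> (nat \<Rightarrow> real) \<Rightarrow> bool" where
  "asym_sim C F D G E \<phi> h \<longleftrightarrow>
     bounded_complete_hseq E \<phi> \<and> admissible h \<and>
     (complete_k E \<longrightarrow> (\<exists>f::nat \<Rightarrow> 'a. bounded (range f) \<and>
         acc_pts (\<lambda>k. (\<phi> (k, jbar E k), f k)) \<subseteq> gph_on C F \<and> sum_cond E h \<phi> f)) \<and>
     (complete_j E \<longrightarrow>
         acc_pts (\<lambda>j. (\<phi> (kbar E j, j), \<phi> (kbar E j, Suc j))) \<subseteq> gph_on D G)"

definition F1 :: "('s \<times> 'f \<Rightarrow> 's set) \<Rightarrow> ('s \<times> 'f \<Rightarrow> 'f set) \<Rightarrow> 's \<times> 'f \<Rightarrow> ('s \<times> 'f) set" where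
  "F1 Fs Ff x = Fs x \<times> Ff x"

definition tt_asym_sim ::
  "('s::euclidean_space \<times> 'f::euclidean_space) set \<Rightarrow> ('s \<times> 'f \<Rightarrow> 's set) \<Rightarrow> ('s \<times> 'f \<Rightarrow> 'f set) \<Rightarrow>
   ('s \<times> 'f) set \<Rightarrow> ('s \<times> 'f \<Rightarrow> ('s \<times> 'f) set) \<Rightarrow>
   (nat \<times> nat) set \<Rightarrow> (nat \<times> nat \<Rightarrow> 's \<times> 'f) \<Rightarrow> (nat \<Rightarrow> real) \<Rightarrow> (nat \<Rightarrow> real) \<Rightarrow> bool" where
  "tt_asym_sim C Fs Ff D G E \<Phi> hs hf \<longleftrightarrow>
     bounded_complete_hseq E \<Phi> \<and> tt_admissible hs hf \<and>
     (complete_k E \<longrightarrow> (\<exists>f::nat \<Rightarrow> 's \<times> 'f. bounded (range f) \<and>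
         acc_pts (\<lambda>k. (\<Phi> (k, jbar E k), f k)) \<subseteq> gph_on C (F1 Fs Ff) \<and>
         sum_cond E hs (\<lambda>p. fst (\<Phi> p)) (\<lambda>k. fst (f k)) \<and>
         sum_cond E hf (\<lambda>p. snd (\<Phi> p)) (\<lambda>k. snd (f k)))) \<and>
     (complete_j E \<longrightarrow>
         acc_pts (\<lambda>j. (\<Phi> (kbar E j, j), \<Phi> (kbar E j, Suc j))) \<subseteq> gph_on D G)"

definition LambdaR :: "('s \<Rightarrow> 'f set) \<Rightarrow> ('s \<times> 'f) set \<Rightarrow> 's \<Rightarrow> 'f set" where
  "LambdaR \<Lambda> S xs = {xf. xf \<in> \<Lambda> xs \<and> (xs, xf) \<in> S}"

definition CR :: "('s \<Rightarrow> 'f set) \<Rightarrow> ('s \<times> 'f) set \<Rightarrow> 's set" where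
  "CR \<Lambda> C = {xs. LambdaR \<Lambda> C xs \<noteq> {}}"

definition DR :: "('s \<Rightarrow> 'f set) \<Rightarrow> ('s \<times> 'f) set \<Rightarrow> 's set" where
  "DR \<Lambda> D = {xs. LambdaR \<Lambda> D xs \<noteq> {}}"

definition FR :: "('s \<Rightarrow> 'f set) \<Rightarrow> ('s \<times> 'f) set \<Rightarrow> ('s \<times> 'f \<Rightarrow> 's::real_normed_vector set) \<Rightarrow> 's \<Rightarrow> 's set" where
  "FR \<Lambda> C Fs xs = closure (convex hull {fs. \<exists>xf \<in> LambdaR \<Lambda> C xs. fs \<in> Fs (xs, xf)})"

definition GR :: "('s \<Rightarrow> 'f set) \<Rightarrow> ('s \<times> 'f) set \<Rightarrow> ('s \<times> 'f \<Rightarrow> ('s \<times> 'f) set) \<Rightarrow> 's \<Rightarrow> 's set" where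
  "GR \<Lambda> D G xs = {gs. \<exists>xf \<in> LambdaR \<Lambda> D xs. gs \<in> fst ` G (xs, xf)}"

end

theory Submission
  imports Defs
begin

text \<open>Every accumulation point of (\<phi>_s, f_s) along the flow indices, resp. of (\<phi>_s, \<phi>_s+)
  along the jump indices, is the slow projection of an accumulation point of (\<Phi>, f), resp.
  (\<Phi>, \<Phi>+), since these pairs are bounded. The latter lies in the graph of F1 on C, resp. of G
  on D, and its state (x_s, x_f) is a limit of \<Phi> along indices tending to infinity, so it lies
  in \<omega>(\<Phi>) and hence x_f is in \<Lambda>(x_s). The slow increments and their summation condition are
  inherited unchanged.\<close>

definition hsd_rows :: "nat \<Rightarrow> (nat \<Rightarrow> nat) \<Rightarrow> (nat \<times> nat) set" where
  "hsd_rows J kk = (\<Union>j<J. {kk j..kk (Suc j)} \<times> {j})"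

lemma mem_hsd_rows_iff [simp]:
  "(k, j) \<in> hsd_rows J kk \<longleftrightarrow> j < J \<and> kk j \<le> k \<and> k \<le> kk (Suc j)"
  unfolding hsd_rows_def by auto

lemma hsd_compact_pieceE:
  assumes "hsd E" "x \<in> E"
  obtains J kk where "kk 0 = 0" "\<forall>j<J. kk j \<le> kk (Suc j)" "x \<in> hsd_rows J kk"
    "hsd_rows J kk \<subseteq> E"
proof -
  obtain S :: "nat \<Rightarrow> (nat \<times> nat) set" where S: "\<forall>i. compact_hsd (S i)" "E = (\<Union>i. S i)"
    using assms(1) unfolding hsd_def by metis
  then obtain P where "compact_hsd P" "x \<in> P" "P \<subseteq> E"
    using assms(2) by auto
  moreover from \<open>compact_hsd P\<close> obtain J kk where "kk 0 = 0" "\<forall>j<J. kk j \<le> kk (Suc j)"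
    "P = hsd_rows J kk"
    unfolding compact_hsd_def hsd_rows_def by blast
  ultimately show ?thesis
    using that by simp
qed

lemma breakpoint_interval_exists:
  fixes kk :: "nat \<Rightarrow> 'a::linorder"
  assumes "kk 0 \<le> b" "b \<le> kk (Suc j)"
  shows "\<exists>j'\<le>j. kk j' \<le> b \<and> b \<le> kk (Suc j')"
  using assms(2)
proof (induction j)
  case 0
  then show ?case using assms(1) by auto
next
  case (Suc j)
  show ?case
  proof (cases "b \<le> kk (Suc j)")
    case True
    then show ?thesis using Suc.IH le_SucI by blast
  next
    case False
    then show ?thesis using Suc.prems by (intro exI[of _ "Suc j"]) simp
  qed
qed

lemma hsd_fst_downward_closed:
  assumes "hsd E" "(a, j) \<in> E" "b \<le> a"
  shows "\<exists>j'. (b, j') \<in> E"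
proof -
  obtain J kk where kk: "kk 0 = 0" "\<forall>j<J. kk j \<le> kk (Suc j)" "(a, j) \<in> hsd_rows J kk"
    "hsd_rows J kk \<subseteq> E"
    by (rule hsd_compact_pieceE[OF assms(1,2)])
  then have "j < J" "kk 0 \<le> b" "b \<le> kk (Suc j)"
    using assms(3) by auto
  then obtain j' where "j' \<le> j" "kk j' \<le> b" "b \<le> kk (Suc j')"
    using breakpoint_interval_exists[of kk b j] by blast
  then have "(b, j') \<in> hsd_rows J kk"
    using \<open>j < J\<close> by simp
  then show ?thesis
    using kk(4) by blast
qed

lemma hsd_snd_downward_closed:
  assumes "hsd E" "(a, j) \<in> E" "j' \<le> j"
  shows "\<exists>a'. (a', j') \<in> E"
proof -
  obtain J kk where kk: "kk 0 = 0" "\<forall>j<J. kk j \<le> kk (Suc j)" "(a, j) \<in> hsd_rows J kk"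
    "hsd_rows J kk \<subseteq> E"
    by (rule hsd_compact_pieceE[OF assms(1,2)])
  then have "(kk j', j') \<in> hsd_rows J kk"
    using assms(3) by simp
  then show ?thesis
    using kk(4) by blast
qed

text \<open>If the first row containing k + 1 started exactly at k + 1, the previous row would end at
  k + 1 as well, contradicting minimality (row 0 starts at 0 \<noteq> k + 1).\<close>
lemma hsd_jbar_mem:
  assumes "hsd E" "(Suc k, j) \<in> E"
  shows "(k, jbar E k) \<in> E"
proof -
  let ?j = "jbar E k"
  have jbar_mem: "(Suc k, ?j) \<in> E"
    unfolding jbar_def using Inf_nat_def1[of "{j. (Suc k, j) \<in> E}"] assms(2) by auto
  have jbar_least: "?j \<le> j'" if "(Suc k, j') \<in> E" for j'
    unfolding jbar_def using that by (simp add: wellorder_Inf_le1)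
  obtain J kk where kk: "kk 0 = 0" "\<forall>j<J. kk j \<le> kk (Suc j)" "(Suc k, ?j) \<in> hsd_rows J kk"
    "hsd_rows J kk \<subseteq> E"
    by (rule hsd_compact_pieceE[OF assms(1) jbar_mem])
  show ?thesis
  proof (cases "kk ?j \<le> k")
    case True
    then have "(k, ?j) \<in> hsd_rows J kk"
      using kk(3) by simp
    then show ?thesis
      using kk(4) by blast
  next
    case False
    then have start: "kk ?j = Suc k"
      using kk(3) by simp
    then obtain p where p: "?j = Suc p"
      using kk(1) by (cases ?j) auto
    moreover have "p < J"
      using kk(3) p by simp
    ultimately have "(Suc k, p) \<in> hsd_rows J kk"
      using kk(2) start by auto
    then show ?thesis
      using kk(4) jbar_least p by fastforce
  qed
qed

lemma hsd_kbar_mem: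
  assumes "hsd E" "(a, Suc j) \<in> E"
  shows "(kbar E j, j) \<in> E" "(kbar E j, Suc j) \<in> E"
proof -
  show kbar_mem: "(kbar E j, Suc j) \<in> E"
    unfolding kbar_def using Inf_nat_def1[of "{k. (k, Suc j) \<in> E}"] assms(2) by auto
  obtain J kk where kk: "kk 0 = 0" "\<forall>j<J. kk j \<le> kk (Suc j)"
    "(kbar E j, Suc j) \<in> hsd_rows J kk" "hsd_rows J kk \<subseteq> E"
    by (rule hsd_compact_pieceE[OF assms(1) kbar_mem])
  then have "(kk (Suc j), Suc j) \<in> E"
    by auto
  then have "kbar E j \<le> kk (Suc j)"
    unfolding kbar_def by (simp add: wellorder_Inf_le1)
  then have "(kbar E j, j) \<in> hsd_rows J kk"
    using kk(2,3) by (auto dest: Suc_lessD)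
  then show "(kbar E j, j) \<in> E"
    using kk(4) by blast
qed

lemma complete_k_jbar_mem:
  assumes "hsd E" "complete_k E"
  shows "(k, jbar E k) \<in> E"
proof -
  obtain a j where "Suc k \<le> a" "(a, j) \<in> E"
    using assms(2) unfolding complete_k_def infinite_nat_iff_unbounded_le by force
  then obtain j' where "(Suc k, j') \<in> E"
    using hsd_fst_downward_closed[OF assms(1)] by blast
  then show ?thesis
    by (rule hsd_jbar_mem[OF assms(1)])
qed

lemma complete_j_kbar_mem:
  assumes "hsd E" "complete_j E"
  shows "(kbar E j, j) \<in> E" "(kbar E j, Suc j) \<in> E"
proof -
  obtain a b where "Suc j \<le> b" "(a, b) \<in> E"
    using assms(2) unfolding complete_j_def infinite_nat_iff_unbounded_le by force
  then obtain a' where "(a', Suc j) \<in> E"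
    using hsd_snd_downward_closed[OF assms(1)] by blast
  then show "(kbar E j, j) \<in> E" "(kbar E j, Suc j) \<in> E"
    using hsd_kbar_mem[OF assms(1)] by blast+
qed

lemma bounded_complete_hseq_fst:
  assumes "bounded_complete_hseq E \<Phi>"
  shows "bounded_complete_hseq E (\<lambda>p. fst (\<Phi> p))"
proof -
  have "(\<lambda>p. fst (\<Phi> p)) ` E = fst ` \<Phi> ` E"
    by auto
  then show ?thesis
    using assms bounded_fst unfolding bounded_complete_hseq_def by metis
qed

lemma acc_pts_continuous_imageE:
  fixes X :: "nat \<Rightarrow> 'a::heine_borel" and g :: "'a \<Rightarrow> 'b::t2_space"
  assumes "bounded (range X)" "continuous_on UNIV g" "p \<in> acc_pts (\<lambda>k. g (X k))"
  obtains r l where "strict_mono r" "(X \<circ> r) \<longlonglongrightarrow> l" "g l = p"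
proof -
  obtain r where r: "strict_mono r" "(\<lambda>k. g (X (r k))) \<longlonglongrightarrow> p"
    using assms(3) unfolding acc_pts_def o_def by blast
  have "bounded (range (X \<circ> r))"
    using assms(1) by (rule bounded_subset) auto
  then obtain l r' where r': "strict_mono r'" "(X \<circ> r \<circ> r') \<longlonglongrightarrow> l"
    using bounded_imp_convergent_subsequence by blast
  have "(\<lambda>k. g (X (r (r' k)))) \<longlonglongrightarrow> g l"
    using continuous_on_tendsto_compose[OF assms(2) r'(2)] by (simp add: o_def)
  moreover have "(\<lambda>k. g (X (r (r' k)))) \<longlonglongrightarrow> p"
    using LIMSEQ_subseq_LIMSEQ[OF r(2) r'(1)] by (simp add: o_def)
  ultimately have "g l = p"
    by (rule LIMSEQ_unique)
  then show ?thesis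
    using that[of "r \<circ> r'"] strict_mono_o[OF r(1) r'(1)] r'(2) by (simp add: o_assoc)
qed

lemma acc_pts_slow_componentsE:
  fixes \<Phi> :: "nat \<times> nat \<Rightarrow> 'a::heine_borel \<times> 'b::heine_borel"
    and Y :: "nat \<Rightarrow> 'c::heine_borel \<times> 'd::heine_borel"
  assumes s: "\<And>k. s k \<in> E" "\<And>k. k \<le> fst (s k) + snd (s k)"
    and bounded: "bounded (range (\<lambda>k. (\<Phi> (s k), Y k)))"
    and p: "p \<in> acc_pts (\<lambda>k. (fst (\<Phi> (s k)), fst (Y k)))"
  obtains x xf v w where "p = (x, v)" "(x, xf) \<in> omega_limit E \<Phi>"
    "((x, xf), (v, w)) \<in> acc_pts (\<lambda>k. (\<Phi> (s k), Y k))"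
proof -
  let ?X = "\<lambda>k. (\<Phi> (s k), Y k)"
  have cont: "continuous_on UNIV (\<lambda>z::('a \<times> 'b) \<times> 'c \<times> 'd. (fst (fst z), fst (snd z)))"
    by (intro continuous_intros)
  have "p \<in> acc_pts (\<lambda>k. (\<lambda>z. (fst (fst z), fst (snd z))) (?X k))"
    using p by simp
  then obtain r l where r: "strict_mono r" "(?X \<circ> r) \<longlonglongrightarrow> l" "(fst (fst l), fst (snd l)) = p"
    by (rule acc_pts_continuous_imageE[OF bounded cont])
  obtain x xf v w where l: "l = ((x, xf), (v, w))"
    by (metis prod.collapse)
  have to_infinity: "filterlim (\<lambda>i. fst (s (r i)) + snd (s (r i))) at_top sequentially"
    by (rule filterlim_at_top_mono[OF filterlim_subseq[OF r(1)]]) (use s(2) in auto)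
  have "(\<lambda>i. \<Phi> (s (r i))) \<longlonglongrightarrow> (x, xf)"
    using tendsto_fst[OF r(2)] l by (simp add: o_def)
  then have "(x, xf) \<in> omega_limit E \<Phi>"
    unfolding omega_limit_def using s(1) to_infinity by (intro CollectI exI[of _ "\<lambda>i. s (r i)"]) simp
  moreover have "l \<in> acc_pts ?X"
    unfolding acc_pts_def using r(1,2) by blast
  ultimately show ?thesis
    using that[of x v xf w] r(3) l by auto
qed

lemma gph_on_reduced_flow:
  assumes "(x, xf) \<in> gph \<Lambda>" "((x, xf), (v, w)) \<in> gph_on C (F1 Fs Ff)"
  shows "(x, v) \<in> gph_on (CR \<Lambda> C) (FR \<Lambda> C Fs)"
proof -
  have xf: "xf \<in> LambdaR \<Lambda> C x"
    using assms unfolding gph_def gph_on_def LambdaR_def by auto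
  moreover have "v \<in> Fs (x, xf)"
    using assms(2) unfolding gph_on_def F1_def by auto
  ultimately have "v \<in> {fs. \<exists>xf \<in> LambdaR \<Lambda> C x. fs \<in> Fs (x, xf)}"
    by blast
  then have "v \<in> FR \<Lambda> C Fs x"
    unfolding FR_def by (rule subsetD[OF closure_subset subsetD[OF hull_subset]])
  then show ?thesis
    using xf unfolding gph_on_def CR_def by auto
qed

lemma gph_on_reduced_jump:
  assumes "(x, xf) \<in> gph \<Lambda>" "((x, xf), (y, yf)) \<in> gph_on D G"
  shows "(x, y) \<in> gph_on (DR \<Lambda> D) (GR \<Lambda> D G)"
proof -
  have xf: "xf \<in> LambdaR \<Lambda> D x"
    using assms unfolding gph_def gph_on_def LambdaR_def by auto
  moreover have "y \<in> fst ` G (x, xf)"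
    using assms(2) unfolding gph_on_def by force
  ultimately show ?thesis
    unfolding gph_on_def DR_def GR_def by auto
qed

lemma reduced_flow_acc_pts:
  fixes \<Phi> :: "nat \<times> nat \<Rightarrow> 'a::{heine_borel, real_normed_vector} \<times> 'b::heine_borel"
  assumes "hsd E" "complete_k E" "bounded (\<Phi> ` E)" "bounded (range f)"
    and "acc_pts (\<lambda>k. (\<Phi> (k, jbar E k), f k)) \<subseteq> gph_on C (F1 Fs Ff)"
    and "omega_limit E \<Phi> \<subseteq> gph \<Lambda>"
  shows "acc_pts (\<lambda>k. (fst (\<Phi> (k, jbar E k)), fst (f k))) \<subseteq> gph_on (CR \<Lambda> C) (FR \<Lambda> C Fs)"
proof
  fix p assume p: "p \<in> acc_pts (\<lambda>k. (fst (\<Phi> (k, jbar E k)), fst (f k)))"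
  have mem: "(k, jbar E k) \<in> E" for k
    using complete_k_jbar_mem[OF assms(1,2)] .
  then have "range (\<lambda>k. (\<Phi> (k, jbar E k), f k)) \<subseteq> \<Phi> ` E \<times> range f"
    by auto
  then have bounded: "bounded (range (\<lambda>k. (\<Phi> (k, jbar E k), f k)))"
    using bounded_Times[OF assms(3,4)] by (rule bounded_subset[rotated])
  obtain x xf v w where "p = (x, v)" "(x, xf) \<in> omega_limit E \<Phi>"
    "((x, xf), (v, w)) \<in> acc_pts (\<lambda>k. (\<Phi> (k, jbar E k), f k))"
    by (rule acc_pts_slow_componentsE[of "\<lambda>k. (k, jbar E k)", OF mem _ bounded p]) simp
  with assms(5,6) have "p = (x, v)" "(x, xf) \<in> gph \<Lambda>" "((x, xf), (v, w)) \<in> gph_on C (F1 Fs Ff)"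
    by blast+
  then show "p \<in> gph_on (CR \<Lambda> C) (FR \<Lambda> C Fs)"
    using gph_on_reduced_flow by simp
qed

lemma reduced_jump_acc_pts:
  fixes \<Phi> :: "nat \<times> nat \<Rightarrow> 'a::heine_borel \<times> 'b::heine_borel"
  assumes "hsd E" "complete_j E" "bounded (\<Phi> ` E)"
    and "acc_pts (\<lambda>j. (\<Phi> (kbar E j, j), \<Phi> (kbar E j, Suc j))) \<subseteq> gph_on D G"
    and "omega_limit E \<Phi> \<subseteq> gph \<Lambda>"
  shows "acc_pts (\<lambda>j. (fst (\<Phi> (kbar E j, j)), fst (\<Phi> (kbar E j, Suc j))))
           \<subseteq> gph_on (DR \<Lambda> D) (GR \<Lambda> D G)"
proof
  fix p assume p: "p \<in> acc_pts (\<lambda>j. (fst (\<Phi> (kbar E j, j)), fst (\<Phi> (kbar E j, Suc j))))"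
  note mem = complete_j_kbar_mem[OF assms(1,2)]
  then have "range (\<lambda>j. (\<Phi> (kbar E j, j), \<Phi> (kbar E j, Suc j))) \<subseteq> \<Phi> ` E \<times> \<Phi> ` E"
    by auto
  then have bounded: "bounded (range (\<lambda>j. (\<Phi> (kbar E j, j), \<Phi> (kbar E j, Suc j))))"
    using bounded_Times[OF assms(3,3)] by (rule bounded_subset[rotated])
  obtain x xf y yf where "p = (x, y)" "(x, xf) \<in> omega_limit E \<Phi>"
    "((x, xf), (y, yf)) \<in> acc_pts (\<lambda>j. (\<Phi> (kbar E j, j), \<Phi> (kbar E j, Suc j)))"
    by (rule acc_pts_slow_componentsE[of "\<lambda>j. (kbar E j, j)", OF mem(1) _ bounded p]) simp
  with assms(4,5) have "p = (x, y)" "(x, xf) \<in> gph \<Lambda>" "((x, xf), (y, yf)) \<in> gph_on D G"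
    by blast+
  then show "p \<in> gph_on (DR \<Lambda> D) (GR \<Lambda> D G)"
    using gph_on_reduced_jump by simp
qed

theorem theorem2:
  fixes C D :: "('s::euclidean_space \<times> 'f::euclidean_space) set"
    and Fs :: "'s \<times> 'f \<Rightarrow> 's set" and Ff :: "'s \<times> 'f \<Rightarrow> 'f set"
    and G :: "'s \<times> 'f \<Rightarrow> ('s \<times> 'f) set"
    and E :: "(nat \<times> nat) set" and \<Phi> :: "nat \<times> nat \<Rightarrow> 's \<times> 'f"
    and hs hf :: "nat \<Rightarrow> real"
    and \<Lambda> :: "'s \<Rightarrow> 'f set"
  assumes "hybrid_basic_conditions C (F1 Fs Ff) D G"
    and "tt_asym_sim C Fs Ff D G E \<Phi> hs hf"
    and "compact (gph \<Lambda>)"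
    and "omega_limit E \<Phi> \<subseteq> gph \<Lambda>"
  shows "asym_sim (CR \<Lambda> C) (FR \<Lambda> C Fs) (DR \<Lambda> D) (GR \<Lambda> D G) E (\<lambda>p. fst (\<Phi> p)) hs"
proof -
  have seq: "bounded_complete_hseq E \<Phi>" and "admissible hs"
    using assms(2) unfolding tt_asym_sim_def tt_admissible_def by auto
  then have dom: "hsd E" "bounded (\<Phi> ` E)"
    unfolding bounded_complete_hseq_def by auto
  have flow: "\<exists>fs. bounded (range fs)
      \<and> acc_pts (\<lambda>k. (fst (\<Phi> (k, jbar E k)), fs k)) \<subseteq> gph_on (CR \<Lambda> C) (FR \<Lambda> C Fs)
      \<and> sum_cond E hs (\<lambda>p. fst (\<Phi> p)) fs" if "complete_k E"
  proof -
    obtain f where f: "bounded (range f)"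
      "acc_pts (\<lambda>k. (\<Phi> (k, jbar E k), f k)) \<subseteq> gph_on C (F1 Fs Ff)"
      "sum_cond E hs (\<lambda>p. fst (\<Phi> p)) (\<lambda>k. fst (f k))"
      using assms(2) \<open>complete_k E\<close> unfolding tt_asym_sim_def by blast
    have "bounded (range (\<lambda>k. fst (f k)))"
      using bounded_fst[OF f(1)] by (simp add: image_image)
    then show ?thesis
      using reduced_flow_acc_pts[OF dom(1) that dom(2) f(1,2) assms(4)] f(3) by blast
  qed
  have "complete_j E \<Longrightarrow> acc_pts (\<lambda>j. (fst (\<Phi> (kbar E j, j)), fst (\<Phi> (kbar E j, Suc j))))
           \<subseteq> gph_on (DR \<Lambda> D) (GR \<Lambda> D G)"
    using assms(2,4) reduced_jump_acc_pts dom unfolding tt_asym_sim_def by blast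
  then show ?thesis
    unfolding asym_sim_def using bounded_complete_hseq_fst[OF seq] \<open>admissible hs\<close> flow by auto
qed

end
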